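(* Let $C\subseteq\mathbb F_2^n$ be a classical linear code of distance $d$ with dual code $C^\perp$, let $1\le t\le n$, and let $\Gamma_t=\{\gamma\subseteq[n]: |\gamma|=t\}$, so that $\hat\Gamma=\Gamma_{\le t}=\{e\subseteq[n]: 0<|e|\le t\}$. Let $D$ be the real matrix with rows indexed by $s\in C^\perp\setminus\{0\}$, columns indexed by $a\in\Gamma_{\le t}$, and entries $D[s,a]=1$ if $a\subseteq s$ and $0$ otherwise. If $d\ge 2t+1$, then $D$ has full rank (rank $|\Gamma_{\le t}|$).
   Context: $C^\perp=\{a\in\mathbb F_2^n: a\cdot c=0\ \forall c\in C\}$. The distance of $C$ is $d=\min\{\mathrm{wt}(c): c\in C\setminus\{0\}\}$. Vectors in $\mathbb F_2^n$ are identified with their support sets in $[n]$. *)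

theory Defs
  imports "HOL-Analysis.Analysis" "HOL-Library.Function_Algebras"
begin

text \<open>Vectors of F_2^n are identified with their supports, subsets of [n] = {1..n}.\<close>

definition linear_code :: "nat \<Rightarrow> nat set set \<Rightarrow> bool" where
  "linear_code n C \<longleftrightarrow> C \<subseteq> Pow {1..n} \<and> {} \<in> C \<and>
     (\<forall>x\<in>C. \<forall>y\<in>C. (x - y) \<union> (y - x) \<in> C)"

definition dual_code :: "nat \<Rightarrow> nat set set \<Rightarrow> nat set set" where
  "dual_code n C = {a. a \<subseteq> {1..n} \<and> (\<forall>c\<in>C. even (card (a \<inter> c)))}"

text \<open>Distance: minimum weight of a nonzero codeword (defined when C has a nonzero word).\<close>
definition code_distance :: "nat set set \<Rightarrow> nat" where
  "code_distance C = Min (card ` (C - {{}}))"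

definition Gamma_le :: "nat \<Rightarrow> nat \<Rightarrow> nat set set" where
  "Gamma_le n t = {e. e \<subseteq> {1..n} \<and> 0 < card e \<and> card e \<le> t}"

definition D_entry :: "nat set \<Rightarrow> nat set \<Rightarrow> real" where
  "D_entry s a = (if a \<subseteq> s then 1 else 0)"

text \<open>Rank of a real matrix M with row index set R and column index set K:
  the dimension of the span of its columns, each column being the real vector
  (function) i \<mapsto> M i j on the rows R (zero outside R), in the real vector
  space of real-valued functions with pointwise operations.\<close>
definition mat_rank :: "'r set \<Rightarrow> 'c set \<Rightarrow> ('r \<Rightarrow> 'c \<Rightarrow> real) \<Rightarrow> nat" where
  "mat_rank R K M = vector_space.dim (\<lambda>(c::real) f. (\<lambda>i. c * f i))
     ((\<lambda>j. \<lambda>i. if i \<in> R then M i j else 0) ` K)"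

end

theory Submission
  imports Defs "HOL-Library.Disjoint_Sets"
begin

text \<open>
  Write \<open>p(s) = (\<Sum>a. w a * [a \<subseteq> s])\<close> for a combination of the columns of \<open>D\<close>.
  Character sums over \<open>C\<close> show that the dual code is an orthogonal array of strength \<open>d - 1\<close>:
  for \<open>|U| < d\<close>, the number of dual codewords containing \<open>U\<close>, times \<open>|C|\<close>, equals the
  number of all subsets of \<open>[n]\<close> containing \<open>U\<close>. Expanding \<open>p(s)\<^sup>2\<close> only involves the
  events \<open>a \<union> b \<subseteq> s\<close> with \<open>|a \<union> b| \<le> 2t < d\<close>, so \<open>|C|\<close> times the sum of \<open>p(s)\<^sup>2\<close> over
  the dual code equals the sum of \<open>p(s)\<^sup>2\<close> over all \<open>s \<subseteq> [n]\<close>. Hence if \<open>p\<close> vanishes on the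
  nonzero dual codewords (it always vanishes at \<open>s = {}\<close>), it vanishes on all \<open>s \<subseteq> [n]\<close>;
  evaluating at an inclusion-minimal \<open>a\<close> with \<open>w a \<noteq> 0\<close> gives \<open>p(a) = w a\<close>, so \<open>w = 0\<close>.
\<close>

lemma neg_one_power_card_Int_symdiff:
  fixes a x y :: "'a set"
  assumes "finite a"
  shows "(-1::int) ^ card (a \<inter> sym_diff x y) = (-1) ^ card (a \<inter> x) * (-1) ^ card (a \<inter> y)"
proof -
  have x: "card (a \<inter> x) = card (a \<inter> x - y) + card (a \<inter> x \<inter> y)"
    using card_Int_Diff[of "a \<inter> x" y] assms by simp
  have y: "card (a \<inter> y) = card (a \<inter> y - x) + card (a \<inter> x \<inter> y)"
    using card_Int_Diff[of "a \<inter> y" x] assms by (simp add: Int_commute Int_left_commute)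
  have "a \<inter> sym_diff x y = (a \<inter> x - y) \<union> (a \<inter> y - x)"
    by blast
  then have xy: "card (a \<inter> sym_diff x y) = card (a \<inter> x - y) + card (a \<inter> y - x)"
    using assms by (simp only:) (rule card_Un_disjoint; blast)
  show ?thesis
    unfolding x y xy by (simp add: power_add flip: mult.assoc)
qed

lemma linear_code_finite: "linear_code n C \<Longrightarrow> finite C"
  unfolding linear_code_def by (meson finite_Pow_iff finite_atLeastAtMost finite_subset)

lemma linear_code_character_sum:
  assumes code: "linear_code n C" and a: "a \<subseteq> {1..n}"
  shows "(\<Sum>c\<in>C. (-1::int) ^ card (a \<inter> c)) = (if a \<in> dual_code n C then int (card C) else 0)"
proof (cases "a \<in> dual_code n C")
  case True
  then show ?thesis
    by (simp add: dual_code_def)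
next
  case False
  then obtain c\<^sub>0 where c\<^sub>0: "c\<^sub>0 \<in> C" "odd (card (a \<inter> c\<^sub>0))"
    using a unfolding dual_code_def by auto
  have "finite a"
    using finite_subset[OF a] by simp
  have "c\<^sub>0 \<noteq> {}"
    using c\<^sub>0(2) by auto
  have "(\<Sum>c\<in>C. (-1::int) ^ card (a \<inter> c)) = 0"
  proof (rule sum_involution_eq_0[where h = "\<lambda>c. sym_diff c c\<^sub>0"])
    show "sym_diff c c\<^sub>0 \<in> C" if "c \<in> C" for c
      using code that c\<^sub>0(1) by (simp add: linear_code_def)
    show "(-1) ^ card (a \<inter> sym_diff c c\<^sub>0) + (-1::int) ^ card (a \<inter> c) = 0" for c
      using neg_one_power_card_Int_symdiff[OF \<open>finite a\<close>, of c c\<^sub>0] c\<^sub>0(2) by simp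
  qed (use \<open>c\<^sub>0 \<noteq> {}\<close> in auto)
  with False show ?thesis
    by simp
qed

lemma superset_character_sum:
  fixes n :: nat
  assumes c: "c \<subseteq> {1..n}" and "\<not> c \<subseteq> U"
  shows "(\<Sum>s | s \<subseteq> {1..n} \<and> U \<subseteq> s. (-1::int) ^ card (s \<inter> c)) = 0"
proof -
  obtain i where i: "i \<in> c" "i \<notin> U"
    using assms by blast
  have "finite c"
    using finite_subset[OF c] by simp
  show ?thesis
  proof (rule sum_involution_eq_0[where h = "\<lambda>s. sym_diff s {i}"])
    show "(-1) ^ card (sym_diff s {i} \<inter> c) + (-1::int) ^ card (s \<inter> c) = 0" for s
      using neg_one_power_card_Int_symdiff[OF \<open>finite c\<close>, of s "{i}"] i(1)
      by (simp add: Int_commute[of c])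
    show "sym_diff s {i} \<in> {s. s \<subseteq> {1..n} \<and> U \<subseteq> s}" if "s \<in> {s. s \<subseteq> {1..n} \<and> U \<subseteq> s}" for s
      using i c that by blast
    show "sym_diff (sym_diff s {i}) {i} = s" "sym_diff s {i} \<noteq> s" for s
      by (auto simp: set_eq_iff)
  qed
qed

lemma dual_code_superset_count:
  assumes code: "linear_code n C" and U: "U \<subseteq> {1..n}" and "card U < code_distance C"
  shows "card C * card {s \<in> dual_code n C. U \<subseteq> s} = card {s. s \<subseteq> {1..n} \<and> U \<subseteq> s}"
proof -
  define S where "S = {s. s \<subseteq> {1..n} \<and> U \<subseteq> s}"
  have "finite C" "finite S" "{} \<in> C" "C \<subseteq> Pow {1..n}"
    using code linear_code_finite by (auto simp: S_def linear_code_def)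
  have no_short_codeword: "\<not> c \<subseteq> U" if "c \<in> C" "c \<noteq> {}" for c
  proof
    assume "c \<subseteq> U"
    then have "card c \<le> card U"
      using U by (simp add: card_mono finite_subset)
    moreover have "code_distance C \<le> card c"
      unfolding code_distance_def using that \<open>finite C\<close> by (intro Min_le) auto
    ultimately show False
      using assms(3) by linarith
  qed
  have "int (card C) * int (card {s \<in> dual_code n C. U \<subseteq> s})
      = (\<Sum>s\<in>S. if s \<in> dual_code n C then int (card C) else 0)"
    using \<open>finite S\<close> by (simp add: sum.If_cases S_def dual_code_def Int_def conj_commute)
  also have "\<dots> = (\<Sum>s\<in>S. \<Sum>c\<in>C. (-1) ^ card (s \<inter> c))"
    by (intro sum.cong refl linear_code_character_sum[OF code, symmetric]) (simp add: S_def)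
  also have "\<dots> = (\<Sum>c\<in>C. \<Sum>s\<in>S. (-1) ^ card (s \<inter> c))"
    by (rule sum.swap)
  also have "\<dots> = (\<Sum>c\<in>C. if c = {} then int (card S) else 0)"
  proof (intro sum.cong refl)
    fix c assume "c \<in> C"
    then show "(\<Sum>s\<in>S. (-1) ^ card (s \<inter> c)) = (if c = {} then int (card S) else 0)"
      using no_short_codeword[of c] superset_character_sum[of c n U] \<open>C \<subseteq> Pow {1..n}\<close>
      unfolding S_def by auto
  qed
  also have "\<dots> = int (card S)"
    using \<open>finite C\<close> \<open>{} \<in> C\<close> by simp
  finally show ?thesis
    unfolding S_def by (simp flip: of_nat_mult)
qed

lemma sum_square_D_combination:
  assumes "finite X" "finite G"
  shows "(\<Sum>s\<in>X. (\<Sum>a\<in>G. w a * D_entry s a)\<^sup>2)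
     = (\<Sum>a\<in>G. \<Sum>b\<in>G. w a * w b * card {s \<in> X. a \<union> b \<subseteq> s})"
proof -
  have "(\<Sum>s\<in>X. (\<Sum>a\<in>G. w a * D_entry s a)\<^sup>2)
      = (\<Sum>s\<in>X. \<Sum>a\<in>G. \<Sum>b\<in>G. w a * w b * (if a \<union> b \<subseteq> s then 1 else 0))"
    by (intro sum.cong refl)
      (auto simp: power2_eq_square sum_product D_entry_def intro!: sum.cong)
  also have "\<dots> = (\<Sum>a\<in>G. \<Sum>b\<in>G. \<Sum>s\<in>X. w a * w b * (if a \<union> b \<subseteq> s then 1 else 0))"
    by (subst sum.swap) (simp add: sum.swap[of _ X])
  also have "\<dots> = (\<Sum>a\<in>G. \<Sum>b\<in>G. w a * w b * card {s \<in> X. a \<union> b \<subseteq> s})"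
    using assms(1) by (simp add: sum.If_cases Int_def flip: sum_distrib_left)
  finally show ?thesis .
qed

lemma dual_code_sum_square_D_combination:
  assumes code: "linear_code n C" and G: "G \<subseteq> Pow {1..n}"
    and short: "\<And>a. a \<in> G \<Longrightarrow> 2 * card a < code_distance C"
  shows "card C * (\<Sum>s\<in>dual_code n C. (\<Sum>a\<in>G. w a * D_entry s a)\<^sup>2)
     = (\<Sum>s\<in>Pow {1..n}. (\<Sum>a\<in>G. w a * D_entry s a)\<^sup>2)"
proof -
  have "finite G"
    using finite_subset[OF G] by simp
  have "finite (dual_code n C)"
    unfolding dual_code_def by (rule finite_subset[of _ "Pow {1..n}"]) auto
  have count: "card C * card {s \<in> dual_code n C. a \<union> b \<subseteq> s} = card {s \<in> Pow {1..n}. a \<union> b \<subseteq> s}"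
    if "a \<in> G" "b \<in> G" for a b
  proof -
    have "card (a \<union> b) \<le> card a + card b"
      by (rule card_Un_le)
    with short[OF \<open>a \<in> G\<close>] short[OF \<open>b \<in> G\<close>] have "card (a \<union> b) < code_distance C"
      by linarith
    with dual_code_superset_count[OF code, of "a \<union> b"] that G show ?thesis
      by (auto simp: Pow_def)
  qed
  have "card C * (\<Sum>s\<in>dual_code n C. (\<Sum>a\<in>G. w a * D_entry s a)\<^sup>2)
      = (\<Sum>a\<in>G. \<Sum>b\<in>G. w a * w b * real (card C * card {s \<in> dual_code n C. a \<union> b \<subseteq> s}))"
    by (simp add: sum_square_D_combination[OF \<open>finite (dual_code n C)\<close> \<open>finite G\<close>]
        sum_distrib_left algebra_simps)
  also have "\<dots> = (\<Sum>a\<in>G. \<Sum>b\<in>G. w a * w b * card {s \<in> Pow {1..n}. a \<union> b \<subseteq> s})"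
    by (intro sum.cong refl) (simp only: count)
  also have "\<dots> = (\<Sum>s\<in>Pow {1..n}. (\<Sum>a\<in>G. w a * D_entry s a)\<^sup>2)"
    by (rule sum_square_D_combination[symmetric]) (simp_all add: \<open>finite G\<close>)
  finally show ?thesis .
qed

lemma D_combination_vanishing_on_support_eq_0:
  assumes "finite G" and vanish: "\<And>s. s \<in> G \<Longrightarrow> (\<Sum>a\<in>G. w a * D_entry s a) = 0"
    and "a \<in> G"
  shows "w a = 0"
proof (rule ccontr)
  assume "w a \<noteq> 0"
  then have "{b \<in> G. w b \<noteq> 0} \<noteq> {}"
    using \<open>a \<in> G\<close> by blast
  with finite_has_minimal[of "{b \<in> G. w b \<noteq> 0}"] \<open>finite G\<close> obtain m
    where m: "m \<in> G" "w m \<noteq> 0" and minimal: "\<And>b. b \<in> G \<Longrightarrow> w b \<noteq> 0 \<Longrightarrow> b \<subseteq> m \<Longrightarrow> m = b"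
    by auto
  have "w b * D_entry m b = (if b = m then w m else 0)" if "b \<in> G" for b
    using minimal[OF that] by (cases "b \<subseteq> m") (auto simp: D_entry_def)
  then have "(\<Sum>b\<in>G. w b * D_entry m b) = w m"
    using \<open>finite G\<close> m(1) by (simp add: sum.delta' cong: sum.cong)
  with vanish[OF m(1)] m(2) show False
    by simp
qed

lemma sum_fun_apply: "finite A \<Longrightarrow> sum f A x = (\<Sum>a\<in>A. f a x)"
  by (induction A rule: finite_induct) auto

lemma inj_on_columns:
  fixes M :: "'r \<Rightarrow> 'c \<Rightarrow> real"
  assumes "finite K"
    and independent: "\<And>w. (\<And>i. i \<in> R \<Longrightarrow> (\<Sum>j\<in>K. w j * M i j) = 0) \<Longrightarrow> \<forall>j\<in>K. w j = 0"
  shows "inj_on (\<lambda>j. \<lambda>i. if i \<in> R then M i j else 0) K"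
proof
  fix a b
  assume ab: "a \<in> K" "b \<in> K" "(\<lambda>i. if i \<in> R then M i a else 0) = (\<lambda>i. if i \<in> R then M i b else 0)"
  define w where "w j = (if j = a then 1 else 0) - (if j = b then 1 else (0::real))" for j
  have "(\<Sum>j\<in>K. w j * M i j) = 0" if "i \<in> R" for i
  proof -
    have "(\<Sum>j\<in>K. w j * M i j) = (\<Sum>j\<in>K. (if j = a then M i a else 0) - (if j = b then M i b else 0))"
      by (intro sum.cong refl) (simp add: w_def left_diff_distrib)
    also have "\<dots> = M i a - M i b"
      using \<open>finite K\<close> ab(1,2) by (simp add: sum_subtractf)
    also have "\<dots> = 0"
      using fun_cong[OF ab(3), of i] that by simp
    finally show ?thesis .
  qed
  then have "\<forall>j\<in>K. w j = 0"
    by (rule independent)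
  then have "w a = 0"
    using ab(1) by blast
  then show "a = b"
    by (simp add: w_def split: if_splits)
qed

lemma mat_rank_eq_card:
  fixes M :: "'r \<Rightarrow> 'c \<Rightarrow> real"
  assumes "finite K"
    and independent: "\<And>w. (\<And>i. i \<in> R \<Longrightarrow> (\<Sum>j\<in>K. w j * M i j) = 0) \<Longrightarrow> \<forall>j\<in>K. w j = 0"
  shows "mat_rank R K M = card K"
proof -
  define col where "col j = (\<lambda>i. if i \<in> R then M i j else 0)" for j
  interpret V: vector_space "\<lambda>(c::real) (f::'r \<Rightarrow> real). (\<lambda>i. c * f i)"
    by unfold_locales (auto simp: algebra_simps fun_eq_iff)
  have inj: "inj_on col K"
    unfolding col_def using assms by (rule inj_on_columns)
  have "u (col j) = 0" if combination: "(\<Sum>v\<in>col ` K. (\<lambda>i. u v * v i)) = 0" and "j \<in> K" for u j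
  proof -
    have "(\<Sum>j\<in>K. u (col j) * M i j) = 0" if "i \<in> R" for i
    proof -
      have "0 = (\<Sum>v\<in>col ` K. (\<lambda>i. u v * v i)) i"
        using combination by simp
      also have "\<dots> = (\<Sum>j\<in>K. u (col j) * col j i)"
        using \<open>finite K\<close> by (simp add: sum.reindex[OF inj] sum_fun_apply)
      also have "\<dots> = (\<Sum>j\<in>K. u (col j) * M i j)"
        using that by (simp add: col_def)
      finally show ?thesis by simp
    qed
    then have "\<forall>j\<in>K. u (col j) = 0"
      by (rule independent)
    with \<open>j \<in> K\<close> show ?thesis
      by blast
  qed
  then have "V.independent (col ` K)"
    unfolding V.dependent_finite[OF finite_imageI[OF \<open>finite K\<close>]] by blast
  then have "V.dim (col ` K) = card K"
    using V.dim_eq_card_independent card_image[OF inj] by simp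
  then show ?thesis
    by (simp add: mat_rank_def col_def)
qed

lemma Gamma_le_subset_Pow: "Gamma_le n t \<subseteq> Pow {1..n}"
  by (auto simp: Gamma_le_def)

lemma finite_Gamma_le: "finite (Gamma_le n t)"
  using finite_subset[OF Gamma_le_subset_Pow] by simp

lemma D_combination_vanishing_on_dual_code_eq_0:
  assumes code: "linear_code n C" and "2 * t < code_distance C"
    and vanish: "\<And>s. s \<in> dual_code n C - {{}} \<Longrightarrow> (\<Sum>a\<in>Gamma_le n t. w a * D_entry s a) = 0"
  shows "\<forall>a\<in>Gamma_le n t. w a = 0"
proof -
  define p where "p s = (\<Sum>a\<in>Gamma_le n t. w a * D_entry s a)" for s
  have "p {} = 0"
    unfolding p_def D_entry_def Gamma_le_def by (intro sum.neutral) auto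
  with vanish have "p s = 0" if "s \<in> dual_code n C" for s
    using that unfolding p_def by (cases "s = {}") auto
  moreover have "2 * card a < code_distance C" if "a \<in> Gamma_le n t" for a
    using that \<open>2 * t < code_distance C\<close> by (auto simp: Gamma_le_def)
  ultimately have "(\<Sum>s\<in>Pow {1..n}. (p s)\<^sup>2) = 0"
    using dual_code_sum_square_D_combination[OF code Gamma_le_subset_Pow[of n t], where w = w, folded p_def]
    by simp
  then have "p s = 0" if "s \<in> Gamma_le n t" for s
    using that Gamma_le_subset_Pow[of n t] by (auto simp: sum_nonneg_eq_0_iff)
  then show ?thesis
    using D_combination_vanishing_on_support_eq_0[OF finite_Gamma_le[of n t], where w = w, folded p_def] by blast
qed

theorem corollary4:
  fixes n t :: nat and C :: "nat set set"
  assumes "linear_code n C"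
    and "C - {{}} \<noteq> {}"
    and "1 \<le> t" and "t \<le> n"
    and "code_distance C \<ge> 2 * t + 1"
  shows "mat_rank (dual_code n C - {{}}) (Gamma_le n t) D_entry = card (Gamma_le n t)"
proof (rule mat_rank_eq_card[OF finite_Gamma_le])
  show "\<forall>a\<in>Gamma_le n t. w a = 0"
    if "\<And>s. s \<in> dual_code n C - {{}} \<Longrightarrow> (\<Sum>a\<in>Gamma_le n t. w a * D_entry s a) = 0" for w
    using D_combination_vanishing_on_dual_code_eq_0[OF assms(1) _ that] assms(5) by simp
qed

end
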